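(* Let $\mathcal H=(\mathcal V,\mathcal E)$ be a (finite) higraph with path DGA $(\mathcal A,\delta)$, and let $D=\sum_{\varepsilon\in\mathcal E}\varepsilon\in\mathcal A$ be the sum of all paths of length $1$. Then $\delta D=D\,D$.
   Context: $\mathbb F=\{0,1\}$. A directed hypergraph $\mathcal H=(\mathcal V,\mathcal E)$ has edges $\varepsilon=(I,J)\in2^{\mathcal V}\times2^{\mathcal V}$, source $I$, target $J$. It is a higraph if for all edges $\varepsilon,\varepsilon'$: (Transitive) if $t(\varepsilon)\cap s(\varepsilon')\ne\emptyset$ then it equals $\{K\}$ for one vertex $K$, the unions $s(\varepsilon)\cup(s(\varepsilon')\setminus\{K\})$ and $(t(\varepsilon)\setminus\{K\})\cup t(\varepsilon')$ are disjoint unions and their pair is an edge; (Acyclic) if $t(\varepsilon)\cap s(\varepsilon')$ and $t(\varepsilon')\cap s(\varepsilon)$ are both non-empty then $\varepsilon=\varepsilon'=(\{K\},\{K\})$. $\mathcal V$ is finite. A path is a non-empty finite directed tree $T=(V,E)$ (nodes, arrows) with $\rho:V\to\mathcal E$ such that for each arrow $e$, $t(\rho(s(e)))\cap s(\rho(t(e)))$ is a single vertex $\rho(e)$, and distinct arrows with common source node or common target node have distinct $\rho(e)$; label-compatible tree isomorphisms identify paths. A single edge is a path of length $1$ (length = number of nodes). Source $s(\rho)=\bigcup_v(s(\rho(v))\setminus\{\rho(e):t(e)=v\})$, target $t(\rho)=\bigcup_v(t(\rho(v))\setminus\{\rho(e):s(e)=v\})$; a vertex of $s(\rho)$ in $s(\rho(v))$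 is sourced by $v$, of $t(\rho)$ in $t(\rho(v))$ targeted by $v$. Refinement $r((\rho,v),\rho'')$ for a node $v$ and a path $\rho''$ with the same source and target as $\rho(v)$: replace $v$ by the tree of $\rho''$, each arrow $(a,v)$ by $(a,v'')$ with $v''$ sourcing $\rho((a,v))$, each arrow $(v,b)$ by $(v'',b)$ with $v''$ targeting $\rho((v,b))$; $0$ otherwise. Path DGA: $\mathcal A$ the $\mathbb F$-vector space on paths, graded by length; product $\rho_1\rho_2$: if $t(\rho_1)\cap s(\rho_2)=\{K\}$, with $K$ targeted by node $v_1$ of $\rho_1$ and sourced by node $v_2$ of $\rho_2$, the path on the disjoint union of the trees plus the arrow $(v_1,v_2)$; $0$ if the intersection is empty; extended bilinearly. $\delta\rho=\sum_{v}\sum_{\rho''\text{ of length }2}r((\rho,v),\rho'')$, extended linearly. *)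

theory Defs
  imports Main "HOL-Library.Z2"
begin

text \<open>An edge is a pair (I, J) of vertex sets: source I = fst, target J = snd.
  The field F = {0,1} is the type bit from HOL-Library.Z2.\<close>

definition higraph :: "'v set \<Rightarrow> ('v set \<times> 'v set) set \<Rightarrow> bool" where
  "higraph V E \<longleftrightarrow>
     finite V \<and> E \<subseteq> Pow V \<times> Pow V \<and>
     (\<forall>\<epsilon>\<in>E. \<forall>\<epsilon>'\<in>E. snd \<epsilon> \<inter> fst \<epsilon>' \<noteq> {} \<longrightarrow>
        (\<exists>K. snd \<epsilon> \<inter> fst \<epsilon>' = {K}
             \<and> fst \<epsilon> \<inter> (fst \<epsilon>' - {K}) = {}
             \<and> (snd \<epsilon> - {K}) \<inter> snd \<epsilon>' = {}
             \<and> (fst \<epsilon> \<union> (fst \<epsilon>' - {K}), (snd \<epsilon> - {K}) \<union> snd \<epsilon>') \<in> E)) \<and>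
     (\<forall>\<epsilon>\<in>E. \<forall>\<epsilon>'\<in>E. snd \<epsilon> \<inter> fst \<epsilon>' \<noteq> {} \<and> snd \<epsilon>' \<inter> fst \<epsilon> \<noteq> {} \<longrightarrow>
        (\<exists>K. \<epsilon> = ({K}, {K}) \<and> \<epsilon>' = ({K}, {K})))"

record 'v rpath =
  nodes  :: "nat set"
  arrows :: "(nat \<times> nat) set"
  nlab   :: "nat \<Rightarrow> 'v set \<times> 'v set"
  alab   :: "nat \<times> nat \<Rightarrow> 'v"

definition is_tree :: "nat set \<Rightarrow> (nat \<times> nat) set \<Rightarrow> bool" where
  "is_tree N A \<longleftrightarrow> finite N \<and> N \<noteq> {} \<and> A \<subseteq> N \<times> N \<and> card A + 1 = card N \<and>
     (\<forall>a\<in>N. \<forall>b\<in>N. (a, b) \<in> (A \<union> A\<inverse>)\<^sup>*)"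

definition is_path :: "('v set \<times> 'v set) set \<Rightarrow> 'v rpath \<Rightarrow> bool" where
  "is_path E P \<longleftrightarrow> is_tree (nodes P) (arrows P) \<and> nlab P ` nodes P \<subseteq> E \<and>
     (\<forall>e\<in>arrows P. snd (nlab P (fst e)) \<inter> fst (nlab P (snd e)) = {alab P e}) \<and>
     (\<forall>e\<in>arrows P. \<forall>e'\<in>arrows P. e \<noteq> e' \<and> (fst e = fst e' \<or> snd e = snd e')
          \<longrightarrow> alab P e \<noteq> alab P e')"

definition piso :: "'v rpath \<Rightarrow> 'v rpath \<Rightarrow> bool" where
  "piso P Q \<longleftrightarrow> arrows P \<subseteq> nodes P \<times> nodes P \<and>
     (\<exists>f. bij_betw f (nodes P) (nodes Q) \<and> arrows Q = map_prod f f ` arrows P \<and>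
          (\<forall>a\<in>nodes P. nlab Q (f a) = nlab P a) \<and>
          (\<forall>e\<in>arrows P. alab Q (map_prod f f e) = alab P e))"

text \<open>Isomorphism class of a labelled tree; paths are such classes.\<close>
definition cls :: "'v rpath \<Rightarrow> 'v rpath set" where
  "cls P = {Q. piso P Q}"

definition rep :: "'v rpath set \<Rightarrow> 'v rpath" where
  "rep C = (SOME P. P \<in> C)"

definition len2_paths :: "('v set \<times> 'v set) set \<Rightarrow> 'v rpath set set" where
  "len2_paths E = {cls P | P. is_path E P \<and> card (nodes P) = 2}"

definition edge_path :: "'v set \<times> 'v set \<Rightarrow> 'v rpath" where
  "edge_path \<epsilon> = \<lparr>nodes = {0}, arrows = {}, nlab = (\<lambda>_. \<epsilon>), alab = (\<lambda>_. undefined)\<rparr>"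

definition sourced :: "'v rpath \<Rightarrow> nat \<Rightarrow> 'v \<Rightarrow> bool" where
  "sourced P u k \<longleftrightarrow> u \<in> nodes P \<and> k \<in> fst (nlab P u) \<and>
     (\<forall>e\<in>arrows P. snd e = u \<longrightarrow> alab P e \<noteq> k)"

definition targeted :: "'v rpath \<Rightarrow> nat \<Rightarrow> 'v \<Rightarrow> bool" where
  "targeted P u k \<longleftrightarrow> u \<in> nodes P \<and> k \<in> snd (nlab P u) \<and>
     (\<forall>e\<in>arrows P. fst e = u \<longrightarrow> alab P e \<noteq> k)"

definition psrc :: "'v rpath \<Rightarrow> 'v set" where
  "psrc P = {k. \<exists>u. sourced P u k}"

definition ptgt :: "'v rpath \<Rightarrow> 'v set" where
  "ptgt P = {k. \<exists>u. targeted P u k}"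

text \<open>Disjoint union of the trees, realised by the node renamings n -> 2n and n -> 2n+1.\<close>
definition glue :: "'v rpath \<Rightarrow> 'v rpath \<Rightarrow> 'v \<Rightarrow> 'v rpath" where
  "glue P1 P2 K =
    (let v1 = (THE u. targeted P1 u K); v2 = (THE u. sourced P2 u K);
         ev = (\<lambda>n::nat. 2 * n); od = (\<lambda>n::nat. 2 * n + 1) in
     \<lparr>nodes = ev ` nodes P1 \<union> od ` nodes P2,
      arrows = map_prod ev ev ` arrows P1 \<union> map_prod od od ` arrows P2 \<union> {(ev v1, od v2)},
      nlab = (\<lambda>n. if even n then nlab P1 (n div 2) else nlab P2 (n div 2)),
      alab = (\<lambda>(a, b). if even a \<and> even b then alab P1 (a div 2, b div 2)
                       else if odd a \<and> odd b then alab P2 (a div 2, b div 2)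
                       else K)\<rparr>)"

text \<open>Refinement r((P,v),Q): None stands for 0.\<close>
definition refine :: "'v rpath \<Rightarrow> nat \<Rightarrow> 'v rpath \<Rightarrow> 'v rpath option" where
  "refine P v Q =
    (if psrc Q = fst (nlab P v) \<and> ptgt Q = snd (nlab P v) then
      (let ev = (\<lambda>n::nat. 2 * n); od = (\<lambda>n::nat. 2 * n + 1);
           inn = (\<lambda>a. THE u. sourced Q u (alab P (a, v)));
           out = (\<lambda>b. THE u. targeted Q u (alab P (v, b))) in
       Some \<lparr>nodes = ev ` (nodes P - {v}) \<union> od ` nodes Q,
        arrows = map_prod ev ev ` {e \<in> arrows P. fst e \<noteq> v \<and> snd e \<noteq> v}
                 \<union> map_prod od od ` arrows Q
                 \<union> {(ev a, od (inn a)) | a. (a, v) \<in> arrows P}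
                 \<union> {(od (out b), ev b) | b. (v, b) \<in> arrows P},
        nlab = (\<lambda>n. if even n then nlab P (n div 2) else nlab Q (n div 2)),
        alab = (\<lambda>(a, b). if even a \<and> even b then alab P (a div 2, b div 2)
                         else if odd a \<and> odd b then alab Q (a div 2, b div 2)
                         else if even a then alab P (a div 2, v)
                         else alab P (v, b div 2))\<rparr>)
     else None)"

text \<open>An element of the path algebra is its coefficient function on path classes
  (finitely supported).\<close>
type_synonym 'v chain = "'v rpath set \<Rightarrow> bit"

definition basis :: "'v rpath set \<Rightarrow> 'v chain" where
  "basis C = (\<lambda>X. if X = C then 1 else 0)"

definition mult_basis :: "'v rpath set \<Rightarrow> 'v rpath set \<Rightarrow> 'v chain" where
  "mult_basis C1 C2 =
    (let P1 = rep C1; P2 = rep C2 in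
     if \<exists>K. ptgt P1 \<inter> psrc P2 = {K}
     then basis (cls (glue P1 P2 (THE K. ptgt P1 \<inter> psrc P2 = {K})))
     else (\<lambda>_. 0))"

definition pmult :: "'v chain \<Rightarrow> 'v chain \<Rightarrow> 'v chain" where
  "pmult a b = (\<lambda>X. \<Sum>C1\<in>{C. a C \<noteq> 0}. \<Sum>C2\<in>{C. b C \<noteq> 0}. a C1 * b C2 * mult_basis C1 C2 X)"

definition diff_basis :: "('v set \<times> 'v set) set \<Rightarrow> 'v rpath set \<Rightarrow> 'v chain" where
  "diff_basis E C = (\<lambda>X. \<Sum>v\<in>nodes (rep C). \<Sum>C''\<in>len2_paths E.
      (case refine (rep C) v (rep C'') of None \<Rightarrow> 0 | Some R \<Rightarrow> basis (cls R) X))"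

definition pdiff :: "('v set \<times> 'v set) set \<Rightarrow> 'v chain \<Rightarrow> 'v chain" where
  "pdiff E a = (\<lambda>X. \<Sum>C\<in>{C. a C \<noteq> 0}. a C * diff_basis E C X)"

definition Dsum :: "('v set \<times> 'v set) set \<Rightarrow> 'v chain" where
  "Dsum E = (\<lambda>X. \<Sum>\<epsilon>\<in>E. basis (cls (edge_path \<epsilon>)) X)"

end

theory Submission
  imports Defs
begin

text \<open>For an edge \<open>\<epsilon>\<close> the only node is refined, so \<open>\<delta>\<epsilon>\<close> is the sum of all
  length-two paths with source \<open>s(\<epsilon>)\<close> and target \<open>t(\<epsilon>)\<close>. By transitivity of the
  higraph the source and target of every length-two path \<open>\<epsilon>\<^sub>1\<epsilon>\<^sub>2\<close> form an edge, necessarily unique,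
  so \<open>\<delta>D\<close> is the sum of all length-two paths, each counted once. On the other side,
  \<open>D D\<close> is the sum of the products \<open>\<epsilon>\<^sub>1\<epsilon>\<^sub>2\<close> over pairs of edges meeting in a single vertex,
  and a length-two path determines its two edges; so \<open>D D\<close> is the same sum.\<close>

definition well_formed :: "'v rpath \<Rightarrow> bool" where
  "well_formed P \<longleftrightarrow> arrows P \<subseteq> nodes P \<times> nodes P"

lemma pisoI:
  assumes "well_formed P" "bij_betw f (nodes P) (nodes Q)" "arrows Q = map_prod f f ` arrows P"
    "\<And>a. a \<in> nodes P \<Longrightarrow> nlab Q (f a) = nlab P a"
    "\<And>e. e \<in> arrows P \<Longrightarrow> alab Q (map_prod f f e) = alab P e"
  shows "piso P Q"
  using assms unfolding piso_def well_formed_def by blast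

lemma pisoE:
  assumes "piso P Q"
  obtains f where "well_formed P" "bij_betw f (nodes P) (nodes Q)"
    "arrows Q = map_prod f f ` arrows P"
    "\<And>a. a \<in> nodes P \<Longrightarrow> nlab Q (f a) = nlab P a"
    "\<And>e. e \<in> arrows P \<Longrightarrow> alab Q (map_prod f f e) = alab P e"
  using assms unfolding piso_def well_formed_def by blast

lemma well_formed_piso: "piso P Q \<Longrightarrow> well_formed Q"
proof (elim pisoE)
  fix f assume "well_formed P" "bij_betw f (nodes P) (nodes Q)" "arrows Q = map_prod f f ` arrows P"
  then show "well_formed Q" unfolding well_formed_def bij_betw_def by auto
qed

lemma piso_refl: "well_formed P \<Longrightarrow> piso P P"
  by (rule pisoI[where f = id]) (simp_all add: map_prod.id)

lemma piso_sym:
  assumes "piso P Q" shows "piso Q P"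
  using assms
proof (elim pisoE)
  fix f assume wf: "well_formed P" and f: "bij_betw f (nodes P) (nodes Q)"
    and ar: "arrows Q = map_prod f f ` arrows P"
    and nl: "\<And>a. a \<in> nodes P \<Longrightarrow> nlab Q (f a) = nlab P a"
    and al: "\<And>e. e \<in> arrows P \<Longrightarrow> alab Q (map_prod f f e) = alab P e"
  define g where "g = inv_into (nodes P) f"
  have g: "bij_betw g (nodes Q) (nodes P)" using f bij_betw_inv_into g_def by blast
  have gf: "g (f a) = a" if "a \<in> nodes P" for a
    using f that g_def bij_betw_inv_into_left by fast
  have gf_arrow: "map_prod g g (map_prod f f e) = e" if "e \<in> arrows P" for e
    using that wf gf by (cases e) (auto simp: well_formed_def)
  show "piso Q P"
  proof (rule pisoI[where f = g])
    show "well_formed Q" using well_formed_piso[OF assms] .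
    show "arrows P = map_prod g g ` arrows Q"
      unfolding ar image_image using gf_arrow by simp
    show "nlab P (g b) = nlab Q b" if "b \<in> nodes Q" for b
    proof -
      have "g b \<in> nodes P" using g that by (meson bij_betwE)
      moreover have "f (g b) = b" using bij_betw_inv_into_right[OF f that] by (simp add: g_def)
      ultimately show ?thesis using nl by metis
    qed
    show "alab P (map_prod g g e) = alab Q e" if "e \<in> arrows Q" for e
      using that al gf_arrow unfolding ar by auto
  qed fact
qed

lemma piso_trans:
  assumes "piso P Q" "piso Q R" shows "piso P R"
  using assms
proof (elim pisoE)
  fix f g assume wf: "well_formed P" and f: "bij_betw f (nodes P) (nodes Q)"
    and ar: "arrows Q = map_prod f f ` arrows P"
    and nl: "\<And>a. a \<in> nodes P \<Longrightarrow> nlab Q (f a) = nlab P a"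
    and al: "\<And>e. e \<in> arrows P \<Longrightarrow> alab Q (map_prod f f e) = alab P e"
    and g: "bij_betw g (nodes Q) (nodes R)"
    and ar': "arrows R = map_prod g g ` arrows Q"
    and nl': "\<And>a. a \<in> nodes Q \<Longrightarrow> nlab R (g a) = nlab Q a"
    and al': "\<And>e. e \<in> arrows Q \<Longrightarrow> alab R (map_prod g g e) = alab Q e"
  show "piso P R"
  proof (rule pisoI[where f = "g \<circ> f"])
    show "bij_betw (g \<circ> f) (nodes P) (nodes R)" using f g by (rule bij_betw_trans)
    show "arrows R = map_prod (g \<circ> f) (g \<circ> f) ` arrows P"
      using ar ar' by (simp add: image_comp map_prod.comp)
    show "nlab R ((g \<circ> f) a) = nlab P a" if "a \<in> nodes P" for a
      using that f nl nl' by (simp add: bij_betwE)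
    show "alab R (map_prod (g \<circ> f) (g \<circ> f) e) = alab P e" if "e \<in> arrows P" for e
    proof -
      have "map_prod f f e \<in> arrows Q" using ar that by simp
      then have "alab R (map_prod g g (map_prod f f e)) = alab P e" using al' al that by simp
      then show ?thesis by (cases e) simp
    qed
  qed fact
qed

lemma cls_eq_piso: "piso P Q \<Longrightarrow> cls P = cls Q"
  unfolding cls_def using piso_sym piso_trans by blast

lemma cls_eq_iff: "well_formed P \<Longrightarrow> cls P = cls Q \<longleftrightarrow> piso P Q"
  using piso_refl[of P] piso_sym[of Q P] cls_eq_piso[of P Q] unfolding cls_def by blast

lemma piso_rep_cls: "well_formed P \<Longrightarrow> piso P (rep (cls P))"
  unfolding rep_def using someI[of "\<lambda>Q. Q \<in> cls P" P] piso_refl by (auto simp: cls_def)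

lemma cls_rep_cls: "well_formed P \<Longrightarrow> cls (rep (cls P)) = cls P"
  using cls_eq_piso[OF piso_rep_cls, of P] by simp

lemma psrc_mono_piso:
  assumes "piso P Q" shows "psrc P \<subseteq> psrc Q"
  using assms
proof (elim pisoE)
  fix f assume wf: "well_formed P" and f: "bij_betw f (nodes P) (nodes Q)"
    and ar: "arrows Q = map_prod f f ` arrows P"
    and nl: "\<And>a. a \<in> nodes P \<Longrightarrow> nlab Q (f a) = nlab P a"
    and al: "\<And>e. e \<in> arrows P \<Longrightarrow> alab Q (map_prod f f e) = alab P e"
  have "sourced Q (f u) k" if u: "sourced P u k" for u k
    unfolding sourced_def
  proof (intro conjI ballI impI)
    show "f u \<in> nodes Q" "k \<in> fst (nlab Q (f u))"
      using u f nl unfolding sourced_def by (auto dest: bij_betwE)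
    fix e assume "e \<in> arrows Q" "snd e = f u"
    then obtain a b where ab: "(a, b) \<in> arrows P" "e = (f a, f b)" "f b = f u"
      unfolding ar by auto
    have "b = u"
      using ab(1,3) u wf f unfolding sourced_def well_formed_def bij_betw_def inj_on_def by blast
    then show "alab Q e \<noteq> k" using ab u al[OF ab(1)] unfolding sourced_def by auto
  qed
  then show "psrc P \<subseteq> psrc Q" unfolding psrc_def by blast
qed

lemma psrc_piso: "piso P Q \<Longrightarrow> psrc P = psrc Q"
  using psrc_mono_piso piso_sym by blast

definition reverse :: "'v rpath \<Rightarrow> 'v rpath" where
  "reverse P = P\<lparr>arrows := prod.swap ` arrows P, nlab := prod.swap \<circ> nlab P,
                  alab := alab P \<circ> prod.swap\<rparr>"

lemma ptgt_eq_psrc_reverse: "ptgt P = psrc (reverse P)"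
  unfolding ptgt_def psrc_def targeted_def sourced_def reverse_def by force

lemma piso_reverse:
  assumes "piso P Q" shows "piso (reverse P) (reverse Q)"
  using assms
proof (elim pisoE)
  fix f assume wf: "well_formed P" and f: "bij_betw f (nodes P) (nodes Q)"
    and ar: "arrows Q = map_prod f f ` arrows P"
    and nl: "\<And>a. a \<in> nodes P \<Longrightarrow> nlab Q (f a) = nlab P a"
    and al: "\<And>e. e \<in> arrows P \<Longrightarrow> alab Q (map_prod f f e) = alab P e"
  show ?thesis
  proof (rule pisoI[where f = f])
    show "well_formed (reverse P)" using wf unfolding well_formed_def reverse_def by auto
    show "arrows (reverse Q) = map_prod f f ` arrows (reverse P)"
      unfolding reverse_def ar by force
  qed (use f nl al in \<open>auto simp: reverse_def\<close>)
qed

lemma ptgt_piso: "piso P Q \<Longrightarrow> ptgt P = ptgt Q"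
  unfolding ptgt_eq_psrc_reverse by (intro psrc_piso piso_reverse)

definition two_edge_path :: "'v set \<times> 'v set \<Rightarrow> 'v set \<times> 'v set \<Rightarrow> 'v \<Rightarrow> 'v rpath" where
  "two_edge_path \<epsilon> \<epsilon>' K =
     \<lparr>nodes = {0, 1}, arrows = {(0, 1)}, nlab = (\<lambda>n. if n = 0 then \<epsilon> else \<epsilon>'), alab = (\<lambda>_. K)\<rparr>"

lemma well_formed_edge_path: "well_formed (edge_path \<epsilon>)"
  unfolding well_formed_def edge_path_def by simp

lemma well_formed_two_edge_path: "well_formed (two_edge_path \<epsilon> \<epsilon>' K)"
  unfolding well_formed_def two_edge_path_def by simp

lemma psrc_edge_path: "psrc (edge_path \<epsilon>) = fst \<epsilon>"
  and ptgt_edge_path: "ptgt (edge_path \<epsilon>) = snd \<epsilon>"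
  unfolding psrc_def ptgt_def sourced_def targeted_def edge_path_def by auto

lemma psrc_two_edge_path: "psrc (two_edge_path \<epsilon> \<epsilon>' K) = fst \<epsilon> \<union> (fst \<epsilon>' - {K})"
  and ptgt_two_edge_path: "ptgt (two_edge_path \<epsilon> \<epsilon>' K) = (snd \<epsilon> - {K}) \<union> snd \<epsilon>'"
  unfolding psrc_def ptgt_def sourced_def targeted_def two_edge_path_def by auto

lemma psrc_rep_cls: "well_formed P \<Longrightarrow> psrc (rep (cls P)) = psrc P"
  and ptgt_rep_cls: "well_formed P \<Longrightarrow> ptgt (rep (cls P)) = ptgt P"
  using psrc_piso ptgt_piso piso_rep_cls by metis+

lemma piso_edge_pathE:
  assumes "piso (edge_path \<epsilon>) Q"
  obtains n where "nodes Q = {n}" "arrows Q = {}" "nlab Q n = \<epsilon>"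
  using assms
proof (elim pisoE)
  fix f assume "bij_betw f (nodes (edge_path \<epsilon>)) (nodes Q)"
    "arrows Q = map_prod f f ` arrows (edge_path \<epsilon>)"
    "\<And>a. a \<in> nodes (edge_path \<epsilon>) \<Longrightarrow> nlab Q (f a) = nlab (edge_path \<epsilon>) a"
  then show thesis using that[of "f 0"] unfolding edge_path_def bij_betw_def by simp
qed

lemma inj_cls_edge_path: "inj (\<lambda>\<epsilon>. cls (edge_path \<epsilon>))"
proof
  fix \<epsilon> \<epsilon>' :: "'v set \<times> 'v set"
  assume "cls (edge_path \<epsilon>) = cls (edge_path \<epsilon>')"
  then have "piso (edge_path \<epsilon>') (edge_path \<epsilon>)"
    using cls_eq_iff well_formed_edge_path by metis
  then show "\<epsilon> = \<epsilon>'" by (elim piso_edge_pathE) (simp add: edge_path_def)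
qed

lemma two_edge_path_cls_inj:
  assumes "cls (two_edge_path \<epsilon>\<^sub>1 \<epsilon>\<^sub>2 K) = cls (two_edge_path \<epsilon>\<^sub>1' \<epsilon>\<^sub>2' K')"
  shows "\<epsilon>\<^sub>1 = \<epsilon>\<^sub>1'" "\<epsilon>\<^sub>2 = \<epsilon>\<^sub>2'"
proof -
  have "piso (two_edge_path \<epsilon>\<^sub>1 \<epsilon>\<^sub>2 K) (two_edge_path \<epsilon>\<^sub>1' \<epsilon>\<^sub>2' K')"
    using assms cls_eq_iff well_formed_two_edge_path by metis
  then obtain f :: "nat \<Rightarrow> nat" where f: "{(0, 1)} = {(f 0, f 1)}"
    "\<And>a. a \<in> {0, 1} \<Longrightarrow> nlab (two_edge_path \<epsilon>\<^sub>1' \<epsilon>\<^sub>2' K') (f a) = nlab (two_edge_path \<epsilon>\<^sub>1 \<epsilon>\<^sub>2 K) a"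
    by (elim pisoE) (simp add: two_edge_path_def)
  then show "\<epsilon>\<^sub>1 = \<epsilon>\<^sub>1'" "\<epsilon>\<^sub>2 = \<epsilon>\<^sub>2'"
    using f(2)[of 0] f(2)[of 1] by (auto simp: two_edge_path_def)
qed

lemma is_path_two_edge_path:
  assumes "\<epsilon> \<in> E" "\<epsilon>' \<in> E" "snd \<epsilon> \<inter> fst \<epsilon>' = {K}"
  shows "is_path E (two_edge_path \<epsilon> \<epsilon>' K)"
proof -
  have "(a, b) \<in> ({(0, 1)} \<union> {(0, 1)}\<inverse>)\<^sup>*" if "a \<in> {0, 1}" "b \<in> {0, 1}" for a b :: nat
    using that by (auto intro: r_into_rtrancl)
  then have "is_tree {0, 1} {(0, 1)}" unfolding is_tree_def by simp
  then show ?thesis using assms unfolding is_path_def two_edge_path_def by auto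
qed

lemma two_node_tree:
  assumes "is_tree N A" "card N = 2"
  obtains c d where "c \<noteq> d" "N = {c, d}" "A = {(c, d)}"
proof -
  obtain a b where ab: "N = {a, b}" "a \<noteq> b" using assms(2) card_2_iff by metis
  have "card A = 1" using assms unfolding is_tree_def by simp
  then obtain x where x: "A = {x}" using card_1_singletonE by blast
  have x_in: "x \<in> N \<times> N" and conn: "(a, b) \<in> (A \<union> A\<inverse>)\<^sup>*"
    using assms(1) ab x unfolding is_tree_def by auto
  have "fst x \<noteq> snd x"
  proof
    assume "fst x = snd x"
    then have "A \<union> A\<inverse> \<subseteq> Id" using x by (cases x) auto
    then have "(A \<union> A\<inverse>)\<^sup>* \<subseteq> Id" by (metis rtrancl__Id rtrancl_mono)
    then show False using conn ab(2) by blast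
  qed
  then show thesis using x_in x that unfolding ab by (cases x) (auto simp: insert_commute)
qed

lemma length_two_path_piso:
  assumes "is_path E P" "card (nodes P) = 2"
  obtains \<epsilon> \<epsilon>' K where "\<epsilon> \<in> E" "\<epsilon>' \<in> E" "snd \<epsilon> \<inter> fst \<epsilon>' = {K}"
    "piso P (two_edge_path \<epsilon> \<epsilon>' K)"
proof -
  have tree: "is_tree (nodes P) (arrows P)" using assms(1) unfolding is_path_def by blast
  obtain c d where cd: "c \<noteq> d" "nodes P = {c, d}" "arrows P = {(c, d)}"
    using two_node_tree[OF tree assms(2)] .
  let ?K = "alab P (c, d)"
  have lab: "nlab P c \<in> E" "nlab P d \<in> E" "snd (nlab P c) \<inter> fst (nlab P d) = {?K}"
    using assms(1) cd unfolding is_path_def by auto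
  have "piso P (two_edge_path (nlab P c) (nlab P d) ?K)"
  proof (rule pisoI[where f = "\<lambda>x. if x = c then 0 else 1"])
    show "bij_betw (\<lambda>x. if x = c then 0 else 1)
        (nodes P) (nodes (two_edge_path (nlab P c) (nlab P d) ?K))"
      using cd unfolding bij_betw_def inj_on_def two_edge_path_def by auto
  qed (use cd in \<open>auto simp: well_formed_def two_edge_path_def\<close>)
  then show thesis using that lab by blast
qed

lemma glue_edge_paths_piso:
  assumes "nodes P\<^sub>1 = {n\<^sub>1}" "arrows P\<^sub>1 = {}" "nlab P\<^sub>1 n\<^sub>1 = \<epsilon>"
    and "nodes P\<^sub>2 = {n\<^sub>2}" "arrows P\<^sub>2 = {}" "nlab P\<^sub>2 n\<^sub>2 = \<epsilon>'"
    and "K \<in> snd \<epsilon>" "K \<in> fst \<epsilon>'"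
  shows "piso (glue P\<^sub>1 P\<^sub>2 K) (two_edge_path \<epsilon> \<epsilon>' K)"
proof -
  have "(THE u. targeted P\<^sub>1 u K) = n\<^sub>1" "(THE u. sourced P\<^sub>2 u K) = n\<^sub>2"
    using assms by (auto simp: targeted_def sourced_def)
  then have G: "nodes (glue P\<^sub>1 P\<^sub>2 K) = {2 * n\<^sub>1, 2 * n\<^sub>2 + 1}"
    "arrows (glue P\<^sub>1 P\<^sub>2 K) = {(2 * n\<^sub>1, 2 * n\<^sub>2 + 1)}"
    "nlab (glue P\<^sub>1 P\<^sub>2 K) = (\<lambda>n. if even n then nlab P\<^sub>1 (n div 2) else nlab P\<^sub>2 (n div 2))"
    "alab (glue P\<^sub>1 P\<^sub>2 K) (2 * n\<^sub>1, 2 * n\<^sub>2 + 1) = K"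
    unfolding glue_def Let_def using assms by (simp_all add: insert_commute)
  show ?thesis
  proof (rule pisoI[where f = "\<lambda>x. if even x then 0 else 1"])
    show "bij_betw (\<lambda>x::nat. if even x then 0 else 1)
        (nodes (glue P\<^sub>1 P\<^sub>2 K)) (nodes (two_edge_path \<epsilon> \<epsilon>' K))"
      unfolding G bij_betw_def inj_on_def two_edge_path_def by auto
  qed (use assms G in \<open>auto simp: well_formed_def two_edge_path_def\<close>)
qed

lemma refine_single_node:
  assumes "nodes P = {n}" "arrows P = {}" "well_formed Q"
  shows "refine P n Q = None \<longleftrightarrow> psrc Q \<noteq> fst (nlab P n) \<or> ptgt Q \<noteq> snd (nlab P n)"
    and "refine P n Q = Some R \<Longrightarrow> piso Q R"
proof -
  show "refine P n Q = None \<longleftrightarrow> psrc Q \<noteq> fst (nlab P n) \<or> ptgt Q \<noteq> snd (nlab P n)"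
    unfolding refine_def Let_def by simp
  assume "refine P n Q = Some R"
  then have R: "nodes R = (\<lambda>x. 2 * x + 1) ` nodes Q"
    "arrows R = map_prod (\<lambda>x. 2 * x + 1) (\<lambda>x. 2 * x + 1) ` arrows Q"
    "nlab R = (\<lambda>m. if even m then nlab P (m div 2) else nlab Q (m div 2))"
    "\<And>a b. odd a \<Longrightarrow> odd b \<Longrightarrow> alab R (a, b) = alab Q (a div 2, b div 2)"
    unfolding refine_def Let_def using assms by (auto split: if_splits)
  show "piso Q R"
    by (rule pisoI[where f = "\<lambda>x. 2 * x + 1"]) (use assms R in \<open>auto simp: bij_betw_def inj_on_def\<close>)
qed

lemma higraph_finite_edges: "higraph V E \<Longrightarrow> finite E"
  unfolding higraph_def by (meson finite_Pow_iff finite_SigmaI finite_subset)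

lemma higraph_compose:
  assumes "higraph V E" "\<epsilon> \<in> E" "\<epsilon>' \<in> E" "snd \<epsilon> \<inter> fst \<epsilon>' = {K}"
  shows "(fst \<epsilon> \<union> (fst \<epsilon>' - {K}), (snd \<epsilon> - {K}) \<union> snd \<epsilon>') \<in> E"
proof -
  obtain K' where "snd \<epsilon> \<inter> fst \<epsilon>' = {K'}"
    "(fst \<epsilon> \<union> (fst \<epsilon>' - {K'}), (snd \<epsilon> - {K'}) \<union> snd \<epsilon>') \<in> E"
    using assms unfolding higraph_def by (metis empty_not_insert)
  then show ?thesis using assms(4) by simp
qed

definition composable :: "('v set \<times> 'v set) set \<Rightarrow> (('v set \<times> 'v set) \<times> ('v set \<times> 'v set)) set" where
  "composable E = {(\<epsilon>, \<epsilon>') \<in> E \<times> E. \<exists>K. snd \<epsilon> \<inter> fst \<epsilon>' = {K}}"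

definition composite_cls :: "('v set \<times> 'v set) \<times> ('v set \<times> 'v set) \<Rightarrow> 'v rpath set" where
  "composite_cls = (\<lambda>(\<epsilon>, \<epsilon>'). cls (two_edge_path \<epsilon> \<epsilon>' (the_elem (snd \<epsilon> \<inter> fst \<epsilon>'))))"

lemma composite_cls_eq: "snd \<epsilon> \<inter> fst \<epsilon>' = {K} \<Longrightarrow> composite_cls (\<epsilon>, \<epsilon>') = cls (two_edge_path \<epsilon> \<epsilon>' K)"
  unfolding composite_cls_def by simp

lemma finite_composable: "finite E \<Longrightarrow> finite (composable E)"
  by (rule finite_subset[of _ "E \<times> E"]) (auto simp: composable_def)

lemma len2_paths_eq: "len2_paths E = composite_cls ` composable E"
proof (intro equalityI subsetI)
  fix X assume "X \<in> len2_paths E"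
  then obtain P where P: "X = cls P" "is_path E P" "card (nodes P) = 2"
    unfolding len2_paths_def by blast
  obtain \<epsilon> \<epsilon>' K where "\<epsilon> \<in> E" "\<epsilon>' \<in> E" and K: "snd \<epsilon> \<inter> fst \<epsilon>' = {K}"
    and iso: "piso P (two_edge_path \<epsilon> \<epsilon>' K)"
    using P(2,3) by (rule length_two_path_piso)
  have "X = composite_cls (\<epsilon>, \<epsilon>')"
    unfolding composite_cls_eq[OF K] P(1) using iso by (rule cls_eq_piso)
  moreover have "(\<epsilon>, \<epsilon>') \<in> composable E" using \<open>\<epsilon> \<in> E\<close> \<open>\<epsilon>' \<in> E\<close> K by (auto simp: composable_def)
  ultimately show "X \<in> composite_cls ` composable E" by blast
next
  fix X assume "X \<in> composite_cls ` composable E"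
  then obtain \<epsilon> \<epsilon>' K where "\<epsilon> \<in> E" "\<epsilon>' \<in> E" and K: "snd \<epsilon> \<inter> fst \<epsilon>' = {K}"
    and X: "X = composite_cls (\<epsilon>, \<epsilon>')"
    unfolding composable_def by auto
  from \<open>\<epsilon> \<in> E\<close> \<open>\<epsilon>' \<in> E\<close> K have "is_path E (two_edge_path \<epsilon> \<epsilon>' K)"
    by (rule is_path_two_edge_path)
  moreover have "card (nodes (two_edge_path \<epsilon> \<epsilon>' K)) = 2" by (simp add: two_edge_path_def)
  ultimately show "X \<in> len2_paths E"
    unfolding len2_paths_def X composite_cls_eq[OF K] by blast
qed

lemma inj_on_composite_cls: "inj_on composite_cls (composable E)"
proof (rule inj_onI)
  fix p q assume "p \<in> composable E" "q \<in> composable E" and pq: "composite_cls p = composite_cls q"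
  then obtain \<epsilon>\<^sub>1 \<epsilon>\<^sub>2 K \<epsilon>\<^sub>1' \<epsilon>\<^sub>2' K' where
    p: "p = (\<epsilon>\<^sub>1, \<epsilon>\<^sub>2)" "snd \<epsilon>\<^sub>1 \<inter> fst \<epsilon>\<^sub>2 = {K}" and
    q: "q = (\<epsilon>\<^sub>1', \<epsilon>\<^sub>2')" "snd \<epsilon>\<^sub>1' \<inter> fst \<epsilon>\<^sub>2' = {K'}"
    unfolding composable_def by auto
  have "cls (two_edge_path \<epsilon>\<^sub>1 \<epsilon>\<^sub>2 K) = cls (two_edge_path \<epsilon>\<^sub>1' \<epsilon>\<^sub>2' K')"
    using pq unfolding p q composite_cls_eq[OF p(2)] composite_cls_eq[OF q(2)] .
  then show "p = q" unfolding p q by (auto dest: two_edge_path_cls_inj)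
qed

lemma finite_len2_paths: "finite E \<Longrightarrow> finite (len2_paths E)"
  unfolding len2_paths_eq by (simp add: finite_composable)

lemma len2_paths_rep:
  assumes "X \<in> len2_paths E" shows "well_formed (rep X)" "cls (rep X) = X"
proof -
  obtain P where "X = cls P" "well_formed P"
    using assms unfolding len2_paths_def is_path_def is_tree_def well_formed_def by blast
  then show "well_formed (rep X)" "cls (rep X) = X"
    using piso_rep_cls well_formed_piso cls_rep_cls by blast+
qed

lemma len2_paths_boundary_edge:
  assumes "higraph V E" "X \<in> len2_paths E"
  shows "(psrc (rep X), ptgt (rep X)) \<in> E"
proof -
  obtain \<epsilon> \<epsilon>' K where e: "\<epsilon> \<in> E" "\<epsilon>' \<in> E" "snd \<epsilon> \<inter> fst \<epsilon>' = {K}"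
    and X: "X = cls (two_edge_path \<epsilon> \<epsilon>' K)"
    using assms(2) unfolding len2_paths_eq composable_def by (auto simp: composite_cls_eq)
  have "(fst \<epsilon> \<union> (fst \<epsilon>' - {K}), (snd \<epsilon> - {K}) \<union> snd \<epsilon>') \<in> E"
    using assms(1) e by (rule higraph_compose)
  then show ?thesis
    unfolding X by (simp add: psrc_rep_cls ptgt_rep_cls well_formed_two_edge_path
      psrc_two_edge_path ptgt_two_edge_path)
qed

lemma mult_basis_edge_paths:
  "mult_basis (cls (edge_path \<epsilon>)) (cls (edge_path \<epsilon>')) =
     (if \<exists>K. snd \<epsilon> \<inter> fst \<epsilon>' = {K} then basis (composite_cls (\<epsilon>, \<epsilon>')) else (\<lambda>_. 0))"
proof -
  let ?P = "rep (cls (edge_path \<epsilon>))" and ?P' = "rep (cls (edge_path \<epsilon>'))"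
  obtain n where P: "nodes ?P = {n}" "arrows ?P = {}" "nlab ?P n = \<epsilon>"
    using piso_rep_cls[OF well_formed_edge_path] by (rule piso_edge_pathE)
  obtain n' where P': "nodes ?P' = {n'}" "arrows ?P' = {}" "nlab ?P' n' = \<epsilon>'"
    using piso_rep_cls[OF well_formed_edge_path] by (rule piso_edge_pathE)
  have st: "ptgt ?P = snd \<epsilon>" "psrc ?P' = fst \<epsilon>'"
    by (simp_all add: ptgt_rep_cls psrc_rep_cls well_formed_edge_path ptgt_edge_path psrc_edge_path)
  show ?thesis
  proof (cases "\<exists>K. snd \<epsilon> \<inter> fst \<epsilon>' = {K}")
    case True
    then obtain K where K: "snd \<epsilon> \<inter> fst \<epsilon>' = {K}" by blast
    then have "K \<in> snd \<epsilon>" "K \<in> fst \<epsilon>'" by auto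
    then have "piso (glue ?P ?P' K) (two_edge_path \<epsilon> \<epsilon>' K)" by (rule glue_edge_paths_piso[OF P P'])
    then have "cls (glue ?P ?P' K) = composite_cls (\<epsilon>, \<epsilon>')"
      unfolding composite_cls_eq[OF K] by (rule cls_eq_piso)
    then show ?thesis unfolding mult_basis_def Let_def st K by simp
  qed (simp add: mult_basis_def Let_def st)
qed

lemma sum_of_bool_eq_delta:
  fixes P :: "'a \<Rightarrow> bool"
  assumes "finite S"
  shows "(\<Sum>x\<in>S. of_bool (a = x \<and> P x) :: 'b :: {comm_monoid_add, zero_neq_one}) =
    of_bool (a \<in> S \<and> P a)"
proof -
  have "(\<Sum>x\<in>S. of_bool (a = x \<and> P x) :: 'b) = (\<Sum>x\<in>S. if a = x then of_bool (P a) else 0)"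
    by (rule sum.cong) auto
  then show ?thesis using assms by (simp add: sum.delta')
qed

lemma sum_basis_inj_on:
  assumes "finite S" "inj_on g S"
  shows "(\<Sum>s\<in>S. basis (g s) X) = of_bool (X \<in> g ` S)"
proof -
  have "(\<Sum>s\<in>S. basis (g s) X) = (\<Sum>Y\<in>g ` S. basis Y X)"
    using assms(2) by (simp add: sum.reindex)
  also have "\<dots> = of_bool (X \<in> g ` S)"
    using assms(1) by (simp add: basis_def sum.delta')
  finally show ?thesis .
qed

lemma diff_basis_edge_path:
  assumes "finite E"
  shows "diff_basis E (cls (edge_path \<epsilon>)) X =
    of_bool (X \<in> len2_paths E \<and> psrc (rep X) = fst \<epsilon> \<and> ptgt (rep X) = snd \<epsilon>)"
proof -
  let ?P = "rep (cls (edge_path \<epsilon>))"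
  obtain n where P: "nodes ?P = {n}" "arrows ?P = {}" "nlab ?P n = \<epsilon>"
    using piso_rep_cls[OF well_formed_edge_path] by (rule piso_edge_pathE)
  have "(case refine ?P n (rep C) of None \<Rightarrow> 0 | Some R \<Rightarrow> basis (cls R) X) =
      of_bool (X = C \<and> psrc (rep C) = fst \<epsilon> \<and> ptgt (rep C) = snd \<epsilon>)"
    if C: "C \<in> len2_paths E" for C
  proof (cases "refine ?P n (rep C)")
    case None
    then show ?thesis using refine_single_node(1)[OF P(1,2) len2_paths_rep(1)[OF C]] P(3) by auto
  next
    case (Some R)
    then have "cls R = C"
      using cls_eq_piso[OF refine_single_node(2)[OF P(1,2) len2_paths_rep(1)[OF C]]]
        len2_paths_rep(2)[OF C] by simp
    then show ?thesis
      using refine_single_node(1)[OF P(1,2) len2_paths_rep(1)[OF C]] P(3) Some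
      by (auto simp: basis_def)
  qed
  then have "diff_basis E (cls (edge_path \<epsilon>)) X =
      (\<Sum>C\<in>len2_paths E. of_bool (X = C \<and> psrc (rep C) = fst \<epsilon> \<and> ptgt (rep C) = snd \<epsilon>))"
    unfolding diff_basis_def P by simp
  also have "\<dots> = of_bool (X \<in> len2_paths E \<and> psrc (rep X) = fst \<epsilon> \<and> ptgt (rep X) = snd \<epsilon>)"
    using finite_len2_paths[OF assms] by (rule sum_of_bool_eq_delta)
  finally show ?thesis .
qed

lemma pdiff_indicator: "pdiff E (\<lambda>C. of_bool (C \<in> S)) X = (\<Sum>C\<in>S. diff_basis E C X)"
  unfolding pdiff_def by (rule sum.cong) auto

lemma pmult_indicator:
  "pmult (\<lambda>C. of_bool (C \<in> S)) (\<lambda>C. of_bool (C \<in> T)) X = (\<Sum>C\<in>S. \<Sum>C'\<in>T. mult_basis C C' X)"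
  unfolding pmult_def by (intro sum.cong) auto

lemma inj_on_cls_edge_path: "inj_on (\<lambda>\<epsilon>. cls (edge_path \<epsilon>)) E"
  using inj_cls_edge_path by (rule inj_on_subset) simp

lemma Dsum_eq: "finite E \<Longrightarrow> Dsum E = (\<lambda>C. of_bool (C \<in> (\<lambda>\<epsilon>. cls (edge_path \<epsilon>)) ` E))"
  unfolding Dsum_def by (rule ext) (simp add: sum_basis_inj_on inj_on_cls_edge_path)

lemma pdiff_Dsum:
  assumes "higraph V E"
  shows "pdiff E (Dsum E) = (\<lambda>X. of_bool (X \<in> len2_paths E))"
proof
  fix X
  have E: "finite E" using assms by (rule higraph_finite_edges)
  have "pdiff E (Dsum E) X = (\<Sum>\<epsilon>\<in>E. diff_basis E (cls (edge_path \<epsilon>)) X)"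
    using E by (simp add: Dsum_eq pdiff_indicator sum.reindex[OF inj_on_cls_edge_path])
  also have "\<dots> = (\<Sum>\<epsilon>\<in>E. of_bool ((psrc (rep X), ptgt (rep X)) = \<epsilon> \<and> X \<in> len2_paths E))"
    using E by (intro sum.cong) (auto simp: diff_basis_edge_path)
  also have "\<dots> = of_bool (X \<in> len2_paths E)"
    using E len2_paths_boundary_edge[OF assms] by (auto simp: sum_of_bool_eq_delta)
  finally show "pdiff E (Dsum E) X = of_bool (X \<in> len2_paths E)" .
qed

lemma pmult_Dsum:
  assumes "finite E"
  shows "pmult (Dsum E) (Dsum E) = (\<lambda>X. of_bool (X \<in> len2_paths E))"
proof
  fix X
  have "pmult (Dsum E) (Dsum E) X =
      (\<Sum>\<epsilon>\<in>E. \<Sum>\<epsilon>'\<in>E. mult_basis (cls (edge_path \<epsilon>)) (cls (edge_path \<epsilon>')) X)"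
    using assms by (simp add: Dsum_eq pmult_indicator sum.reindex[OF inj_on_cls_edge_path])
  also have "\<dots> = (\<Sum>\<epsilon>\<in>E. \<Sum>\<epsilon>'\<in>E.
      if (\<epsilon>, \<epsilon>') \<in> composable E then basis (composite_cls (\<epsilon>, \<epsilon>')) X else 0)"
    by (intro sum.cong) (auto simp: mult_basis_edge_paths composable_def)
  also have "\<dots> = (\<Sum>(\<epsilon>, \<epsilon>')\<in>E \<times> E.
      if (\<epsilon>, \<epsilon>') \<in> composable E then basis (composite_cls (\<epsilon>, \<epsilon>')) X else 0)"
    by (rule sum.cartesian_product)
  also have "\<dots> = (\<Sum>p\<in>composable E. basis (composite_cls p) X)"
    using assms by (intro sum.mono_neutral_cong_right) (auto simp: composable_def split: prod.splits)
  also have "\<dots> = of_bool (X \<in> len2_paths E)"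
    unfolding len2_paths_eq
    using assms inj_on_composite_cls finite_composable by (intro sum_basis_inj_on)
  finally show "pmult (Dsum E) (Dsum E) X = of_bool (X \<in> len2_paths E)" .
qed

theorem proposition2p17:
  fixes V :: "'v set" and E :: "('v set \<times> 'v set) set"
  assumes "higraph V E"
  shows "pdiff E (Dsum E) = pmult (Dsum E) (Dsum E)"
  using pdiff_Dsum[OF assms] pmult_Dsum[OF higraph_finite_edges[OF assms]] by simp

end
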